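(* Let $R$ be a left noetherian domain and let $A=\sigma(R)\langle x_1,\dots,x_n\rangle$ be a bijective skew PBW extension of $R$. (i) The algebraic subsets of $R^n$ are the closed sets of a topology on $R^n$ (the Zariski topology); that is, $\emptyset$ and $R^n$ are algebraic, the union of two algebraic sets is algebraic, and the intersection of any family of algebraic sets is algebraic. (ii) Every finite subset $X\subseteq R^n$ is algebraic, hence closed in this topology.
   Context: Skew PBW extension: a ring $A$ is a skew PBW extension of a ring $R$, written $A=\sigma(R)\langle x_1,\dots,x_n\rangle$, if (1) $R\subseteq A$ is a subring; (2) there are $x_1,\dots,x_n\in A$ such that $A$ is a free left $R$-module with basis $\mathrm{Mon}(A)=\{x^\alpha=x_1^{\alpha_1}\cdots x_n^{\alpha_n}:\alpha\in\mathbb N^n\}$; (3) for every $i$ and every $r\in R\setminus\{0\}$ there is $c_{i,r}\in R\setminus\{0\}$ with $x_ir-c_{i,r}x_i\in R$; (4) for every $i,j$ there is $c_{i,j}\in R\setminus\{0\}$ with $x_jx_i-c_{i,j}x_ix_j\in R+Rx_1+\cdots+Rx_n$. For each $i$ there are then an injective ring endomorphism $\sigma_i$ of $R$ and a $\sigma_i$-derivation $\delta_i$ of $R$ with $x_ir=\sigma_i(r)x_i+\delta_i(r)$ for all $r\in R$. $A$ is bijective if every $\sigma_i$ is bijective and every $c_{i,j}$ is invertible. Under these hypotheses $A$ is a left noetherian domain. Roots and vanishing sets: for $Z=(z_1,\dots,z_n)\in R^n$, $\langle Z\rangle$ denotes the two-sided ideal of $A$ generated by $x_1-z_1,\dots,x_n-z_n$.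 $Z$ is a root of $f\in A$, written $f(Z)=0$, iff $f\in\langle Z\rangle$. For $f\in A$, $V(f)=\{Z\in R^n: f(Z)=0\}$. Algebraic sets: a subset $X\subseteq R^n$ is algebraic if either $X=R^n$ or there exists $0\neq g\in A$ with $X\subseteq V(g)$. *)

theory Defs
  imports "HOL-Algebra.Algebra"
begin

text \<open>Variables are indexed x 0, ..., x (n-1) (instead of x_1..x_n).
  Exponent vectors alpha in N^n are functions nat => nat vanishing outside {0..<n}.\<close>

definition exps :: "nat \<Rightarrow> (nat \<Rightarrow> nat) set" where
  "exps n = {\<alpha>. \<forall>i\<ge>n. \<alpha> i = 0}"

definition mon :: "('a, 'b) ring_scheme \<Rightarrow> (nat \<Rightarrow> 'a) \<Rightarrow> nat \<Rightarrow> (nat \<Rightarrow> nat) \<Rightarrow> 'a" where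
  "mon A x n \<alpha> = foldr (\<lambda>i acc. (x i [^]\<^bsub>A\<^esub> (\<alpha> i)) \<otimes>\<^bsub>A\<^esub> acc) [0..<n] \<one>\<^bsub>A\<^esub>"

definition free_left_basis ::
  "('a, 'b) ring_scheme \<Rightarrow> 'a set \<Rightarrow> (nat \<Rightarrow> 'a) \<Rightarrow> nat \<Rightarrow> bool" where
  "free_left_basis A R x n \<longleftrightarrow>
     (\<forall>a \<in> carrier A. \<exists>!c :: (nat \<Rightarrow> nat) \<Rightarrow> 'a.
        (\<forall>\<alpha>. c \<alpha> \<in> R) \<and> (\<forall>\<alpha>. \<alpha> \<notin> exps n \<longrightarrow> c \<alpha> = \<zero>\<^bsub>A\<^esub>) \<and>
        finite {\<alpha>. c \<alpha> \<noteq> \<zero>\<^bsub>A\<^esub>} \<and>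
        a = finsum A (\<lambda>\<alpha>. c \<alpha> \<otimes>\<^bsub>A\<^esub> mon A x n \<alpha>) {\<alpha>. c \<alpha> \<noteq> \<zero>\<^bsub>A\<^esub>})"

definition lin_span :: "('a, 'b) ring_scheme \<Rightarrow> 'a set \<Rightarrow> (nat \<Rightarrow> 'a) \<Rightarrow> nat \<Rightarrow> 'a \<Rightarrow> bool" where
  "lin_span A R x n y \<longleftrightarrow>
     (\<exists>d0 \<in> R. \<exists>d. (\<forall>k<n. d k \<in> R) \<and>
        y = d0 \<oplus>\<^bsub>A\<^esub> finsum A (\<lambda>k. d k \<otimes>\<^bsub>A\<^esub> x k) {..<n})"

definition skew_PBW :: "('a, 'b) ring_scheme \<Rightarrow> 'a set \<Rightarrow> (nat \<Rightarrow> 'a) \<Rightarrow> nat \<Rightarrow> bool" where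
  "skew_PBW A R x n \<longleftrightarrow>
     ring A \<and> subring R A \<and>
     (\<forall>i<n. x i \<in> carrier A) \<and>
     free_left_basis A R x n \<and>
     (\<forall>i<n. \<forall>r \<in> R - {\<zero>\<^bsub>A\<^esub>}. \<exists>c \<in> R - {\<zero>\<^bsub>A\<^esub>}.
        x i \<otimes>\<^bsub>A\<^esub> r \<ominus>\<^bsub>A\<^esub> c \<otimes>\<^bsub>A\<^esub> x i \<in> R) \<and>
     (\<forall>i<n. \<forall>j<n. \<exists>c \<in> R - {\<zero>\<^bsub>A\<^esub>}.
        lin_span A R x n (x j \<otimes>\<^bsub>A\<^esub> x i \<ominus>\<^bsub>A\<^esub> c \<otimes>\<^bsub>A\<^esub> x i \<otimes>\<^bsub>A\<^esub> x j))"

text \<open>The endomorphism sigma_i: x_i r = sigma_i(r) x_i + delta_i(r), delta_i(r) in R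
  (sigma_i(r) is uniquely determined by freeness of the basis).\<close>
definition pbw_sigma :: "('a, 'b) ring_scheme \<Rightarrow> 'a set \<Rightarrow> (nat \<Rightarrow> 'a) \<Rightarrow> nat \<Rightarrow> 'a \<Rightarrow> 'a" where
  "pbw_sigma A R x i r = (THE c. c \<in> R \<and> x i \<otimes>\<^bsub>A\<^esub> r \<ominus>\<^bsub>A\<^esub> c \<otimes>\<^bsub>A\<^esub> x i \<in> R)"

definition bijective_skew_PBW :: "('a, 'b) ring_scheme \<Rightarrow> 'a set \<Rightarrow> (nat \<Rightarrow> 'a) \<Rightarrow> nat \<Rightarrow> bool" where
  "bijective_skew_PBW A R x n \<longleftrightarrow>
     skew_PBW A R x n \<and>
     (\<forall>i<n. bij_betw (pbw_sigma A R x i) R R) \<and>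
     (\<forall>i<n. \<forall>j<n. \<forall>c \<in> R - {\<zero>\<^bsub>A\<^esub>}.
        lin_span A R x n (x j \<otimes>\<^bsub>A\<^esub> x i \<ominus>\<^bsub>A\<^esub> c \<otimes>\<^bsub>A\<^esub> x i \<otimes>\<^bsub>A\<^esub> x j) \<longrightarrow>
        (\<exists>d \<in> R. c \<otimes>\<^bsub>A\<^esub> d = \<one>\<^bsub>A\<^esub> \<and> d \<otimes>\<^bsub>A\<^esub> c = \<one>\<^bsub>A\<^esub>))"

definition subring_domain :: "('a, 'b) ring_scheme \<Rightarrow> 'a set \<Rightarrow> bool" where
  "subring_domain A R \<longleftrightarrow> \<one>\<^bsub>A\<^esub> \<noteq> \<zero>\<^bsub>A\<^esub> \<and>
     (\<forall>a \<in> R. \<forall>b \<in> R. a \<otimes>\<^bsub>A\<^esub> b = \<zero>\<^bsub>A\<^esub> \<longrightarrow> a = \<zero>\<^bsub>A\<^esub> \<or> b = \<zero>\<^bsub>A\<^esub>)"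

definition left_ideal_in :: "('a, 'b) ring_scheme \<Rightarrow> 'a set \<Rightarrow> 'a set \<Rightarrow> bool" where
  "left_ideal_in A R I \<longleftrightarrow> I \<subseteq> R \<and> \<zero>\<^bsub>A\<^esub> \<in> I \<and>
     (\<forall>a \<in> I. \<forall>b \<in> I. a \<oplus>\<^bsub>A\<^esub> b \<in> I) \<and> (\<forall>a \<in> I. \<ominus>\<^bsub>A\<^esub> a \<in> I) \<and>
     (\<forall>r \<in> R. \<forall>a \<in> I. r \<otimes>\<^bsub>A\<^esub> a \<in> I)"

definition left_noetherian_sub :: "('a, 'b) ring_scheme \<Rightarrow> 'a set \<Rightarrow> bool" where
  "left_noetherian_sub A R \<longleftrightarrow>
     (\<forall>I :: nat \<Rightarrow> 'a set. (\<forall>k. left_ideal_in A R (I k)) \<and> (\<forall>k. I k \<subseteq> I (Suc k)) \<longrightarrow>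
        (\<exists>m. \<forall>k\<ge>m. I k = I m))"

definition points :: "'a set \<Rightarrow> nat \<Rightarrow> 'a list set" where
  "points R n = {Z. length Z = n \<and> set Z \<subseteq> R}"

definition point_ideal :: "('a, 'b) ring_scheme \<Rightarrow> (nat \<Rightarrow> 'a) \<Rightarrow> nat \<Rightarrow> 'a list \<Rightarrow> 'a set" where
  "point_ideal A x n Z = genideal A {x i \<ominus>\<^bsub>A\<^esub> Z ! i | i. i < n}"

definition vanishing :: "('a, 'b) ring_scheme \<Rightarrow> 'a set \<Rightarrow> (nat \<Rightarrow> 'a) \<Rightarrow> nat \<Rightarrow> 'a \<Rightarrow> 'a list set" where
  "vanishing A R x n f = {Z \<in> points R n. f \<in> point_ideal A x n Z}"

definition algebraic_set :: "('a, 'b) ring_scheme \<Rightarrow> 'a set \<Rightarrow> (nat \<Rightarrow> 'a) \<Rightarrow> nat \<Rightarrow> 'a list set \<Rightarrow> bool" where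
  "algebraic_set A R x n S \<longleftrightarrow> S \<subseteq> points R n \<and>
     (S = points R n \<or> (\<exists>g \<in> carrier A. g \<noteq> \<zero>\<^bsub>A\<^esub> \<and> S \<subseteq> vanishing A R x n g))"

end

(*
  Order the exponents degree-lexicographically.  By induction on deg d, the commutation rules give
  x_i x^d = c x^(d+e_i) + (terms of degree at most deg d) with c nonzero in R: x_i is moved past
  the first variable x_k of x^d using x_i x_k = c' x_k x_i + (linear terms), and the coefficients
  stay nonzero because R is a domain.  It follows that leading terms multiply with nonzero leading
  coefficient, so A has no zero divisors.  Then V(g) and V(h) lie in V(gh) with gh nonzero, every
  point Z lies in V(x_1 - z_1), and intersections are immediate.
*)

theory Submission
  imports Defs "HOL-Library.Function_Algebras" "HOL-Library.Fun_Lexorder"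
begin

section \<open>Degree-lexicographic order on exponents\<close>

definition exp_unit :: "nat \<Rightarrow> nat \<Rightarrow> nat" where
  "exp_unit j = (\<lambda>i. if i = j then 1 else 0)"

definition total_degree :: "nat \<Rightarrow> (nat \<Rightarrow> nat) \<Rightarrow> nat" where
  "total_degree n a = (\<Sum>i<n. a i)"

definition deglex_less :: "nat \<Rightarrow> (nat \<Rightarrow> nat) \<Rightarrow> (nat \<Rightarrow> nat) \<Rightarrow> bool" where
  "deglex_less n a b \<longleftrightarrow> total_degree n a < total_degree n b \<or>
     (total_degree n a = total_degree n b \<and> less_fun a b)"

lemma zero_in_exps: "0 \<in> exps n"
  by (simp add: exps_def)

lemma add_in_exps: "a \<in> exps n \<Longrightarrow> b \<in> exps n \<Longrightarrow> a + b \<in> exps n"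
  by (simp add: exps_def)

lemma exp_unit_in_exps: "j < n \<Longrightarrow> exp_unit j \<in> exps n"
  by (simp add: exps_def exp_unit_def)

lemma total_degree_add: "total_degree n (a + b) = total_degree n a + total_degree n b"
  by (simp add: total_degree_def sum.distrib)

lemma total_degree_exp_unit: "j < n \<Longrightarrow> total_degree n (exp_unit j) = 1"
  by (simp add: total_degree_def exp_unit_def)

lemma deglex_less_irrefl: "\<not> deglex_less n a a"
  by (simp add: deglex_less_def less_fun_irrefl)

lemma deglex_less_trans: "deglex_less n a b \<Longrightarrow> deglex_less n b c \<Longrightarrow> deglex_less n a c"
  unfolding deglex_less_def using less_fun_trans by auto

lemma deglex_less_add_right: "deglex_less n a b \<Longrightarrow> deglex_less n (a + c) (b + c)"
  by (auto simp: deglex_less_def total_degree_add less_fun_def)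

lemma deglex_less_if_degree_less: "total_degree n a < total_degree n b \<Longrightarrow> deglex_less n a b"
  by (simp add: deglex_less_def)

lemma deglex_less_total:
  assumes "a \<in> exps n" "b \<in> exps n" "a \<noteq> b"
  shows "deglex_less n a b \<or> deglex_less n b a"
proof -
  have "{k. a k \<noteq> b k} \<subseteq> {..<n}"
    using assms(1,2) by (force simp: exps_def not_less[symmetric])
  then have "less_fun a b \<or> less_fun b a"
    using less_fun_trichotomy assms(3) finite_subset by blast
  then show ?thesis
    unfolding deglex_less_def by (metis linorder_neqE_nat)
qed

lemma finite_exps_has_deglex_max:
  assumes "finite S" "S \<noteq> {}" "S \<subseteq> exps n"
  shows "\<exists>m\<in>S. \<forall>s\<in>S - {m}. deglex_less n s m"
  using assms
proof (induction S rule: finite_ne_induct)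
  case (insert a S)
  then obtain m where m: "m \<in> S" "\<forall>s\<in>S - {m}. deglex_less n s m"
    by auto
  show ?case
  proof (cases "deglex_less n m a")
    case True
    then show ?thesis
      using m deglex_less_trans by (metis Diff_iff insertCI insertE)
  next
    case False
    then have "a \<noteq> m \<longrightarrow> deglex_less n a m"
      using deglex_less_total insert.prems m(1) by blast
    then show ?thesis
      using m by auto
  qed
qed simp

lemma exps_split_least:
  assumes "a \<in> exps n" "a j \<noteq> 0"
  obtains k b where "k \<le> j" "k < n" "b \<in> exps n" "\<forall>l<k. b l = 0" "a = b + exp_unit k"
proof -
  define k where "k = (LEAST k. a k \<noteq> 0)"
  have k: "a k \<noteq> 0" "k \<le> j"
    using assms(2) unfolding k_def by (auto intro: LeastI Least_le)
  have below: "\<forall>l<k. a l = 0"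
    unfolding k_def using not_less_Least by blast
  have "k < n"
    using assms(1) k(1) by (force simp: exps_def not_less[symmetric])
  define b where "b = a(k := a k - 1)"
  have "b \<in> exps n" "\<forall>l<k. b l = 0"
    using assms(1) below by (auto simp: b_def exps_def)
  moreover have "a = b + exp_unit k"
    using k(1) by (simp add: fun_eq_iff b_def exp_unit_def)
  ultimately show thesis
    using that k(2) \<open>k < n\<close> by blast
qed

lemma exps_induct [consumes 1, case_names zero step]:
  assumes "a \<in> exps n" "P 0"
    and step: "\<And>j a. j < n \<Longrightarrow> a \<in> exps n \<Longrightarrow> \<forall>l<j. a l = 0 \<Longrightarrow> P a \<Longrightarrow> P (a + exp_unit j)"
  shows "P a"
  using assms(1)
proof (induction "total_degree n a" arbitrary: a rule: less_induct)
  case less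
  show ?case
  proof (cases "a = 0")
    case True
    then show ?thesis using assms(2) by simp
  next
    case False
    then obtain j where "a j \<noteq> 0" by (auto simp: fun_eq_iff)
    with less.prems obtain k b where kb: "k < n" "b \<in> exps n" "\<forall>l<k. b l = 0" "a = b + exp_unit k"
      by (rule exps_split_least)
    then have "total_degree n b < total_degree n a"
      by (simp add: total_degree_add total_degree_exp_unit)
    then show ?thesis
      using less.hyps kb step by blast
  qed
qed

section \<open>Skew PBW extensions over a domain\<close>

(* Exponents are combined as whole functions from here on: unfolding sums pointwise would destroy
   the eta-expanded instances that higher-order unification produces in induction rules, so that
   they no longer match the lemmas stated below. *)
declare plus_fun_apply [simp del] zero_fun_apply [simp del]

locale skew_PBW_domain = ring A for A (structure) +
  fixes R :: "'a set" and x :: "nat \<Rightarrow> 'a" and n :: nat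
  assumes skew_PBW: "skew_PBW A R x n"
    and domain_R: "subring_domain A R"
begin

lemma subring_R: "subring R A"
  using skew_PBW by (simp add: skew_PBW_def)

lemma R_closed [simp]: "r \<in> R \<Longrightarrow> r \<in> carrier A"
  using subringE(1)[OF subring_R] by blast

lemma zero_in_R: "\<zero> \<in> R"
  using subringE(2)[OF subring_R] .

lemma one_in_R: "\<one> \<in> R"
  using subringE(3)[OF subring_R] .

lemma uminus_in_R: "r \<in> R \<Longrightarrow> \<ominus> r \<in> R"
  using subringE(5)[OF subring_R] .

lemma mult_in_R: "r \<in> R \<Longrightarrow> s \<in> R \<Longrightarrow> r \<otimes> s \<in> R"
  using subringE(6)[OF subring_R] .

lemma add_in_R: "r \<in> R \<Longrightarrow> s \<in> R \<Longrightarrow> r \<oplus> s \<in> R"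
  using subringE(7)[OF subring_R] .

lemma one_neq_zero: "\<one> \<noteq> \<zero>"
  using domain_R by (simp add: subring_domain_def)

lemma mult_in_R_nonzero: "r \<in> R - {\<zero>} \<Longrightarrow> s \<in> R - {\<zero>} \<Longrightarrow> r \<otimes> s \<in> R - {\<zero>}"
  using domain_R mult_in_R by (auto simp: subring_domain_def)

lemma x_closed [simp]: "i < n \<Longrightarrow> x i \<in> carrier A"
  using skew_PBW by (simp add: skew_PBW_def)

lemma free_basis: "free_left_basis A R x n"
  using skew_PBW by (simp add: skew_PBW_def)

lemma eq_add_diff: "a \<in> carrier A \<Longrightarrow> b \<in> carrier A \<Longrightarrow> a = b \<oplus> (a \<ominus> b)"
  by (simp add: a_minus_def add.m_lcomm r_neg)

lemma x_mult_R:
  assumes "i < n" "r \<in> R"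
  obtains s t where "s \<in> R" "t \<in> R" "r \<noteq> \<zero> \<Longrightarrow> s \<noteq> \<zero>" "x i \<otimes> r = s \<otimes> x i \<oplus> t"
proof (cases "r = \<zero>")
  case True
  then show thesis
    using that[of \<zero> \<zero>] assms zero_in_R by simp
next
  case False
  then obtain s where "s \<in> R - {\<zero>}" "x i \<otimes> r \<ominus> s \<otimes> x i \<in> R"
    using skew_PBW assms unfolding skew_PBW_def by blast
  then show thesis
    using that eq_add_diff[of "x i \<otimes> r" "s \<otimes> x i"] assms by auto
qed

lemma x_mult_x:
  assumes "i < n" "j < n"
  obtains c l where "c \<in> R - {\<zero>}" "lin_span A R x n l" "x j \<otimes> x i = c \<otimes> x i \<otimes> x j \<oplus> l"
proof -
  obtain c where "c \<in> R - {\<zero>}" "lin_span A R x n (x j \<otimes> x i \<ominus> c \<otimes> x i \<otimes> x j)"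
    using skew_PBW assms unfolding skew_PBW_def by blast
  then show thesis
    using that eq_add_diff[of "x j \<otimes> x i" "c \<otimes> x i \<otimes> x j"] assms by auto
qed

abbreviation M :: "(nat \<Rightarrow> nat) \<Rightarrow> 'a" where
  "M \<equiv> mon A x n"

definition mon_from :: "nat \<Rightarrow> (nat \<Rightarrow> nat) \<Rightarrow> 'a" where
  "mon_from k a = foldr (\<lambda>i acc. x i [^] a i \<otimes> acc) [k..<n] \<one>"

lemma mon_from_closed [simp]: "mon_from k a \<in> carrier A"
proof -
  have *: "set l \<subseteq> {..<n} \<Longrightarrow> foldr (\<lambda>i acc. x i [^] a i \<otimes> acc) l \<one> \<in> carrier A" for l
    by (induction l) auto
  show ?thesis
    unfolding mon_from_def by (rule *) auto
qed

lemma mon_eq_mon_from: "M a = mon_from 0 a"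
  by (simp add: mon_def mon_from_def)

lemma mon_closed [simp]: "M a \<in> carrier A"
  by (simp add: mon_eq_mon_from)

lemma mon_from_Suc: "k < n \<Longrightarrow> mon_from k a = x k [^] a k \<otimes> mon_from (Suc k) a"
  unfolding mon_from_def by (simp add: upt_rec)

lemma mon_from_cong: "(\<And>j. k \<le> j \<Longrightarrow> a j = b j) \<Longrightarrow> mon_from k a = mon_from k b"
proof -
  assume eq: "\<And>j. k \<le> j \<Longrightarrow> a j = b j"
  have *: "set l \<subseteq> {k..} \<Longrightarrow>
      foldr (\<lambda>i acc. x i [^] a i \<otimes> acc) l \<one> = foldr (\<lambda>i acc. x i [^] b i \<otimes> acc) l \<one>" for l
    by (induction l) (auto simp: eq)
  show ?thesis
    unfolding mon_from_def by (rule *) auto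
qed

lemma mon_eq_mon_from_vanishing: "k \<le> n \<Longrightarrow> \<forall>j<k. a j = 0 \<Longrightarrow> M a = mon_from k a"
proof (induction k)
  case (Suc k)
  then show ?case
    by (simp add: mon_from_Suc)
qed (simp add: mon_eq_mon_from)

lemma x_mult_mon:
  assumes "i < n" "\<forall>j<i. a j = 0"
  shows "x i \<otimes> M a = M (a + exp_unit i)"
proof -
  have ai: "(a + exp_unit i) i = Suc (a i)" "\<forall>j<i. (a + exp_unit i) j = 0"
    using assms(2) by (auto simp: exp_unit_def plus_fun_apply)
  have "x i \<otimes> M a = x i \<otimes> (x i [^] a i \<otimes> mon_from (Suc i) a)"
    using assms by (simp add: mon_eq_mon_from_vanishing[of i] mon_from_Suc)
  also have "\<dots> = x i [^] Suc (a i) \<otimes> mon_from (Suc i) a"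
    using assms(1) by (metis m_assoc nat_pow_Suc2 nat_pow_closed x_closed mon_from_closed)
  also have "mon_from (Suc i) a = mon_from (Suc i) (a + exp_unit i)"
    by (rule mon_from_cong) (simp add: exp_unit_def plus_fun_apply)
  also have "x i [^] Suc (a i) \<otimes> mon_from (Suc i) (a + exp_unit i) = M (a + exp_unit i)"
    using assms(1) mon_eq_mon_from_vanishing[of i "a + exp_unit i"] mon_from_Suc[of i] ai by simp
  finally show ?thesis .
qed

lemma mon_zero: "M 0 = \<one>"
  by (simp add: mon_eq_mon_from_vanishing[of n] mon_from_def zero_fun_apply)

lemma mon_exp_unit: "i < n \<Longrightarrow> M (exp_unit i) = x i"
  using x_mult_mon[of i 0] by (simp add: mon_zero zero_fun_apply)

inductive_set mon_span :: "((nat \<Rightarrow> nat) \<Rightarrow> bool) \<Rightarrow> 'a set" for P where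
  zero: "\<zero> \<in> mon_span P"
| add_scaled_mon: "r \<in> R \<Longrightarrow> a \<in> exps n \<Longrightarrow> P a \<Longrightarrow> y \<in> mon_span P \<Longrightarrow> r \<otimes> M a \<oplus> y \<in> mon_span P"

lemma mon_span_closed [simp]: "y \<in> mon_span P \<Longrightarrow> y \<in> carrier A"
  by (induction rule: mon_span.induct) auto

lemma scaled_mon_in_mon_span: "r \<in> R \<Longrightarrow> a \<in> exps n \<Longrightarrow> P a \<Longrightarrow> r \<otimes> M a \<in> mon_span P"
  using mon_span.add_scaled_mon[OF _ _ _ mon_span.zero, of r a P] by simp

lemma mon_span_add: "y \<in> mon_span P \<Longrightarrow> z \<in> mon_span P \<Longrightarrow> y \<oplus> z \<in> mon_span P"
proof (induction rule: mon_span.induct)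
  case (add_scaled_mon r a y)
  then have "r \<otimes> M a \<oplus> y \<oplus> z = r \<otimes> M a \<oplus> (y \<oplus> z)"
    by (simp add: a_assoc)
  then show ?case
    using add_scaled_mon mon_span.add_scaled_mon by auto
qed simp

lemma mon_span_smult: "y \<in> mon_span P \<Longrightarrow> r \<in> R \<Longrightarrow> r \<otimes> y \<in> mon_span P"
proof (induction rule: mon_span.induct)
  case zero
  then show ?case by (simp add: mon_span.zero)
next
  case (add_scaled_mon s a y)
  then have "r \<otimes> (s \<otimes> M a \<oplus> y) = (r \<otimes> s) \<otimes> M a \<oplus> r \<otimes> y"
    by (simp add: r_distr m_assoc)
  then show ?case
    using add_scaled_mon mon_span.add_scaled_mon mult_in_R by auto
qed

lemma mon_span_mono: "y \<in> mon_span P \<Longrightarrow> (\<And>a. P a \<Longrightarrow> Q a) \<Longrightarrow> y \<in> mon_span Q"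
  by (induction rule: mon_span.induct) (auto intro: mon_span.intros)

lemma mon_span_finsum:
  "finite K \<Longrightarrow> (\<And>k. k \<in> K \<Longrightarrow> f k \<in> mon_span P) \<Longrightarrow> finsum A f K \<in> mon_span P"
proof (induction K rule: finite_induct)
  case empty
  then show ?case by (simp add: mon_span.zero)
next
  case (insert k K)
  then have "finsum A f (insert k K) = f k \<oplus> finsum A f K"
    by (intro finsum_insert) (auto intro: mon_span_closed)
  then show ?case
    using insert mon_span_add by auto
qed

lemma lin_span_closed: "lin_span A R x n l \<Longrightarrow> l \<in> carrier A"
  unfolding lin_span_def by (auto intro!: finsum_closed)

subsection \<open>Commuting a variable past a monomial\<close>

abbreviation deg_le_span :: "nat \<Rightarrow> 'a set" where
  "deg_le_span D \<equiv> mon_span (\<lambda>a. total_degree n a \<le> D)"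

definition x_mon_leading :: "nat \<Rightarrow> (nat \<Rightarrow> nat) \<Rightarrow> bool" where
  "x_mon_leading i d \<longleftrightarrow> (\<exists>c\<in>R - {\<zero>}. \<exists>l\<in>deg_le_span (total_degree n d).
     x i \<otimes> M d = c \<otimes> M (d + exp_unit i) \<oplus> l)"

lemma x_mon_leading_if_vanishing_below: "i < n \<Longrightarrow> \<forall>j<i. d j = 0 \<Longrightarrow> x_mon_leading i d"
  unfolding x_mon_leading_def using x_mult_mon one_in_R one_neq_zero mon_span.zero
  by (intro bexI[of _ \<one>] bexI[of _ \<zero>]) auto

lemma x_mult_scaled_mon:
  assumes "x_mon_leading i d" "i < n" "r \<in> R" "d \<in> exps n"
  obtains c l where "c \<in> R" "r \<noteq> \<zero> \<Longrightarrow> c \<noteq> \<zero>" "l \<in> deg_le_span (total_degree n d)"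
    "x i \<otimes> (r \<otimes> M d) = c \<otimes> M (d + exp_unit i) \<oplus> l"
proof -
  obtain s t where st: "s \<in> R" "t \<in> R" "r \<noteq> \<zero> \<Longrightarrow> s \<noteq> \<zero>" "x i \<otimes> r = s \<otimes> x i \<oplus> t"
    using x_mult_R assms(2,3) by blast
  obtain c l where cl: "c \<in> R - {\<zero>}" "l \<in> deg_le_span (total_degree n d)"
    "x i \<otimes> M d = c \<otimes> M (d + exp_unit i) \<oplus> l"
    using assms(1) unfolding x_mon_leading_def by blast
  have "x i \<otimes> (r \<otimes> M d) = (x i \<otimes> r) \<otimes> M d"
    using assms by (simp add: m_assoc)
  also have "\<dots> = s \<otimes> (x i \<otimes> M d) \<oplus> t \<otimes> M d"
    using assms st by (simp add: l_distr m_assoc)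
  also have "\<dots> = (s \<otimes> c) \<otimes> M (d + exp_unit i) \<oplus> (s \<otimes> l \<oplus> t \<otimes> M d)"
    using assms st cl by (simp add: r_distr m_assoc a_assoc)
  finally show thesis
  proof (rule that[rotated -1])
    show "s \<otimes> c \<in> R" "r \<noteq> \<zero> \<Longrightarrow> s \<otimes> c \<noteq> \<zero>"
      using st cl mult_in_R_nonzero mult_in_R by auto
    show "s \<otimes> l \<oplus> t \<otimes> M d \<in> deg_le_span (total_degree n d)"
      using st cl assms by (intro mon_span_add mon_span_smult scaled_mon_in_mon_span) auto
  qed
qed

lemma x_mult_scaled_mon_vanishing_below:
  assumes "k < n" "\<forall>l<k. a l = 0" "a \<in> exps n" "r \<in> R - {\<zero>}"
  obtains c l where "c \<in> R - {\<zero>}" "l \<in> deg_le_span (total_degree n a)"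
    "x k \<otimes> (r \<otimes> M a) = c \<otimes> M (a + exp_unit k) \<oplus> l"
proof -
  have "x_mon_leading k a"
    using assms(1,2) by (rule x_mon_leading_if_vanishing_below)
  then show thesis
    by (rule x_mult_scaled_mon) (use assms that in auto)
qed

lemma x_mult_deg_le_span:
  assumes leading: "\<And>d i. d \<in> exps n \<Longrightarrow> total_degree n d \<le> D \<Longrightarrow> i < n \<Longrightarrow> x_mon_leading i d"
    and "j < n"
  shows "y \<in> deg_le_span D \<Longrightarrow> x j \<otimes> y \<in> deg_le_span (Suc D)"
proof (induction rule: mon_span.induct)
  case zero
  then show ?case using assms(2) by (simp add: mon_span.zero)
next
  case (add_scaled_mon r a y)
  obtain c l where cl: "c \<in> R" "l \<in> deg_le_span (total_degree n a)"
    "x j \<otimes> (r \<otimes> M a) = c \<otimes> M (a + exp_unit j) \<oplus> l"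
    using x_mult_scaled_mon[OF leading] add_scaled_mon.hyps assms(2) by metis
  have "x j \<otimes> (r \<otimes> M a \<oplus> y) = c \<otimes> M (a + exp_unit j) \<oplus> l \<oplus> x j \<otimes> y"
    using add_scaled_mon.hyps assms(2) cl by (simp add: r_distr)
  moreover have "c \<otimes> M (a + exp_unit j) \<in> deg_le_span (Suc D)"
    using cl add_scaled_mon.hyps assms(2)
    by (intro scaled_mon_in_mon_span) (auto simp: add_in_exps exp_unit_in_exps total_degree_add total_degree_exp_unit)
  moreover have "l \<in> deg_le_span (Suc D)"
    using cl(2) by (rule mon_span_mono) (use add_scaled_mon.hyps(3) in simp)
  ultimately show ?case
    using add_scaled_mon.IH mon_span_add by auto
qed

lemma lin_span_mult_deg_le_span:
  assumes leading: "\<And>d i. d \<in> exps n \<Longrightarrow> total_degree n d \<le> D \<Longrightarrow> i < n \<Longrightarrow> x_mon_leading i d"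
    and "lin_span A R x n l" "y \<in> deg_le_span D"
  shows "l \<otimes> y \<in> deg_le_span (Suc D)"
proof -
  obtain d0 d where d: "d0 \<in> R" "\<forall>k<n. d k \<in> R" "l = d0 \<oplus> finsum A (\<lambda>k. d k \<otimes> x k) {..<n}"
    using assms(2) unfolding lin_span_def by blast
  have "l \<otimes> y = d0 \<otimes> y \<oplus> finsum A (\<lambda>k. d k \<otimes> x k) {..<n} \<otimes> y"
    using d assms(3) by (simp add: l_distr Pi_iff)
  also have "finsum A (\<lambda>k. d k \<otimes> x k) {..<n} \<otimes> y = finsum A (\<lambda>k. d k \<otimes> (x k \<otimes> y)) {..<n}"
    using d assms(3) by (simp add: finsum_ldistr Pi_iff, intro finsum_cong') (auto simp: m_assoc)
  moreover have "d0 \<otimes> y \<in> deg_le_span (Suc D)"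
    using mon_span_smult[OF assms(3) d(1)] by (rule mon_span_mono) simp
  moreover have "finsum A (\<lambda>k. d k \<otimes> (x k \<otimes> y)) {..<n} \<in> deg_le_span (Suc D)"
    using d(2) x_mult_deg_le_span[OF leading _ assms(3)] mon_span_smult by (intro mon_span_finsum) auto
  ultimately show ?thesis
    using mon_span_add by auto
qed

text \<open>The commutation relation for \<open>x\<^sub>i x\<^sub>k\<close> moves \<open>x\<^sub>i\<close> past the first
  variable of \<open>x\<^bsup>d\<^esup>\<close>; what remains is an instance of lower degree.\<close>

lemma x_mon_leading_swap:
  assumes leading: "\<And>d i. d \<in> exps n \<Longrightarrow> total_degree n d \<le> total_degree n b \<Longrightarrow> i < n \<Longrightarrow> x_mon_leading i d"
    and "k < i" "i < n" "b \<in> exps n" "\<forall>l<k. b l = 0"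
  shows "x_mon_leading i (b + exp_unit k)"
proof -
  define d where "d = b + exp_unit k"
  have k: "k < n" using assms(2,3) by simp
  have deg_d: "total_degree n d = Suc (total_degree n b)"
    using k by (simp add: d_def total_degree_add total_degree_exp_unit)
  have M_d: "M d = x k \<otimes> M b"
    using x_mult_mon[OF k assms(5)] by (simp add: d_def)
  obtain c l where cl: "c \<in> R - {\<zero>}" "lin_span A R x n l" "x i \<otimes> x k = c \<otimes> x k \<otimes> x i \<oplus> l"
    using x_mult_x[OF k assms(3)] by blast
  obtain c1 l1 where cl1: "c1 \<in> R - {\<zero>}" "l1 \<in> deg_le_span (total_degree n b)"
    "x i \<otimes> M b = c1 \<otimes> M (b + exp_unit i) \<oplus> l1"
    using leading[OF assms(4) order_refl assms(3)] unfolding x_mon_leading_def by blast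
  have "\<forall>l<k. (b + exp_unit i) l = 0"
    using assms(2,5) by (auto simp: exp_unit_def plus_fun_apply)
  then obtain c2 l2 where "c2 \<in> R - {\<zero>}" "l2 \<in> deg_le_span (total_degree n (b + exp_unit i))"
    "x k \<otimes> (c1 \<otimes> M (b + exp_unit i)) = c2 \<otimes> M (b + exp_unit i + exp_unit k) \<oplus> l2"
    by (rule x_mult_scaled_mon_vanishing_below[OF k]) (use cl1 assms(3,4) in \<open>auto simp: add_in_exps exp_unit_in_exps\<close>)
  moreover have "total_degree n (b + exp_unit i) = total_degree n d"
    using assms(3) k by (simp add: deg_d total_degree_add total_degree_exp_unit)
  moreover have "b + exp_unit i + exp_unit k = d + exp_unit i"
    by (simp add: d_def add_ac)
  ultimately have cl2: "c2 \<in> R - {\<zero>}" "l2 \<in> deg_le_span (total_degree n d)"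
    "x k \<otimes> (c1 \<otimes> M (b + exp_unit i)) = c2 \<otimes> M (d + exp_unit i) \<oplus> l2"
    by auto
  have "x i \<otimes> M d = (c \<otimes> x k \<otimes> x i \<oplus> l) \<otimes> M b"
    using k assms(3) by (simp add: M_d cl(3)[symmetric] m_assoc)
  also have "\<dots> = c \<otimes> (x k \<otimes> (c1 \<otimes> M (b + exp_unit i)) \<oplus> x k \<otimes> l1) \<oplus> l \<otimes> M b"
    using cl cl1 k assms(3) lin_span_closed by (simp add: l_distr r_distr m_assoc)
  also have "\<dots> = (c \<otimes> c2) \<otimes> M (d + exp_unit i) \<oplus> (c \<otimes> (l2 \<oplus> x k \<otimes> l1) \<oplus> l \<otimes> M b)"
    using cl cl1 cl2 k lin_span_closed by (simp add: r_distr m_assoc a_assoc)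
  finally have "x i \<otimes> M d = (c \<otimes> c2) \<otimes> M (d + exp_unit i) \<oplus> (c \<otimes> (l2 \<oplus> x k \<otimes> l1) \<oplus> l \<otimes> M b)" .
  moreover have "c \<otimes> c2 \<in> R - {\<zero>}"
    using cl cl2 mult_in_R_nonzero by auto
  moreover have "c \<otimes> (l2 \<oplus> x k \<otimes> l1) \<oplus> l \<otimes> M b \<in> deg_le_span (total_degree n d)"
  proof -
    have "x k \<otimes> l1 \<in> deg_le_span (total_degree n d)"
      using x_mult_deg_le_span[OF leading k cl1(2)] deg_d by simp
    moreover have "l \<otimes> M b \<in> deg_le_span (total_degree n d)"
      using lin_span_mult_deg_le_span[OF leading cl(2), where y = "M b"] deg_d one_in_R assms(4)
        scaled_mon_in_mon_span[of \<one> b] by simp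
    ultimately show ?thesis
      using cl cl2 mon_span_add mon_span_smult by blast
  qed
  ultimately show ?thesis
    unfolding x_mon_leading_def d_def by blast
qed

lemma x_mon_leading: "d \<in> exps n \<Longrightarrow> i < n \<Longrightarrow> x_mon_leading i d"
proof (induction "total_degree n d" arbitrary: d i rule: less_induct)
  case less
  show ?case
  proof (cases "\<forall>j<i. d j = 0")
    case True
    then show ?thesis
      using less.prems x_mon_leading_if_vanishing_below by blast
  next
    case False
    then obtain j where "j < i" "d j \<noteq> 0" by blast
    from less.prems(1) \<open>d j \<noteq> 0\<close> obtain k b where kb: "k \<le> j" "k < n" "b \<in> exps n" "\<forall>l<k. b l = 0"
      "d = b + exp_unit k"
      by (rule exps_split_least)
    then have "total_degree n b < total_degree n d"
      by (simp add: total_degree_add total_degree_exp_unit)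
    then show ?thesis
      using x_mon_leading_swap[of b k i] less kb \<open>j < i\<close> by simp
  qed
qed

subsection \<open>Leading terms\<close>

abbreviation lower_span :: "(nat \<Rightarrow> nat) \<Rightarrow> 'a set" where
  "lower_span g \<equiv> mon_span (\<lambda>a. deglex_less n a g)"

definition has_lead_exp :: "(nat \<Rightarrow> nat) \<Rightarrow> 'a \<Rightarrow> bool" where
  "has_lead_exp \<alpha> f \<longleftrightarrow> \<alpha> \<in> exps n \<and> (\<exists>c\<in>R - {\<zero>}. \<exists>l\<in>lower_span \<alpha>. f = c \<otimes> M \<alpha> \<oplus> l)"

lemma has_lead_exp_closed: "has_lead_exp \<alpha> f \<Longrightarrow> f \<in> carrier A"
  unfolding has_lead_exp_def by auto

lemma has_lead_exp_in_lower_span: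
  assumes "has_lead_exp \<alpha> f" "deglex_less n \<alpha> \<beta>"
  shows "f \<in> lower_span \<beta>"
proof -
  obtain c l where "c \<in> R" "l \<in> lower_span \<alpha>" "f = c \<otimes> M \<alpha> \<oplus> l" "\<alpha> \<in> exps n"
    using assms(1) unfolding has_lead_exp_def by blast
  then show ?thesis
    using assms(2) deglex_less_trans
    by (auto intro!: mon_span.add_scaled_mon elim!: mon_span_mono)
qed

lemma x_mult_scaled_mon_lower:
  assumes "j < n" "r \<in> R" "a \<in> exps n"
  obtains c l where "c \<in> R" "r \<noteq> \<zero> \<Longrightarrow> c \<noteq> \<zero>" "l \<in> lower_span (a + exp_unit j)"
    "x j \<otimes> (r \<otimes> M a) = c \<otimes> M (a + exp_unit j) \<oplus> l"
proof -
  obtain c l where cl: "c \<in> R" "r \<noteq> \<zero> \<Longrightarrow> c \<noteq> \<zero>" "l \<in> deg_le_span (total_degree n a)"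
    "x j \<otimes> (r \<otimes> M a) = c \<otimes> M (a + exp_unit j) \<oplus> l"
    using x_mult_scaled_mon[OF x_mon_leading[OF assms(3,1)] assms] by metis
  have "l \<in> lower_span (a + exp_unit j)"
    using cl(3)
    by (rule mon_span_mono) (use assms(1) in \<open>simp add: deglex_less_if_degree_less total_degree_add total_degree_exp_unit\<close>)
  with cl that show thesis by blast
qed

lemma x_mult_lower_span:
  assumes "j < n"
  shows "y \<in> lower_span g \<Longrightarrow> x j \<otimes> y \<in> lower_span (g + exp_unit j)"
proof (induction rule: mon_span.induct)
  case zero
  then show ?case using assms by (simp add: mon_span.zero)
next
  case (add_scaled_mon r a y)
  obtain c l where cl: "c \<in> R" "l \<in> lower_span (a + exp_unit j)"
    "x j \<otimes> (r \<otimes> M a) = c \<otimes> M (a + exp_unit j) \<oplus> l"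
    using x_mult_scaled_mon_lower[OF assms add_scaled_mon.hyps(1,2)] by metis
  have less: "deglex_less n (a + exp_unit j) (g + exp_unit j)"
    using add_scaled_mon.hyps(3) by (rule deglex_less_add_right)
  have "x j \<otimes> (r \<otimes> M a \<oplus> y) = c \<otimes> M (a + exp_unit j) \<oplus> l \<oplus> x j \<otimes> y"
    using add_scaled_mon.hyps assms cl by (simp add: r_distr)
  moreover have "c \<otimes> M (a + exp_unit j) \<in> lower_span (g + exp_unit j)"
    using cl add_scaled_mon.hyps assms less
    by (intro scaled_mon_in_mon_span) (auto simp: add_in_exps exp_unit_in_exps)
  moreover have "l \<in> lower_span (g + exp_unit j)"
    using cl(2) by (rule mon_span_mono) (use less deglex_less_trans in blast)
  ultimately show ?case
    using add_scaled_mon.IH mon_span_add by metis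
qed

lemma x_mult_has_lead_exp:
  assumes "j < n" "has_lead_exp \<alpha> f"
  shows "has_lead_exp (\<alpha> + exp_unit j) (x j \<otimes> f)"
proof -
  obtain c l where cl: "\<alpha> \<in> exps n" "c \<in> R - {\<zero>}" "l \<in> lower_span \<alpha>" "f = c \<otimes> M \<alpha> \<oplus> l"
    using assms(2) unfolding has_lead_exp_def by blast
  obtain c' l' where cl': "c' \<in> R" "c' \<noteq> \<zero>" "l' \<in> lower_span (\<alpha> + exp_unit j)"
    "x j \<otimes> (c \<otimes> M \<alpha>) = c' \<otimes> M (\<alpha> + exp_unit j) \<oplus> l'"
    using x_mult_scaled_mon_lower[OF assms(1) _ cl(1), of c] cl(2) by blast
  have "x j \<otimes> f = c' \<otimes> M (\<alpha> + exp_unit j) \<oplus> (l' \<oplus> x j \<otimes> l)"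
    using assms(1) cl cl' by (simp add: r_distr a_assoc)
  moreover have "l' \<oplus> x j \<otimes> l \<in> lower_span (\<alpha> + exp_unit j)"
    using cl'(3) x_mult_lower_span[OF assms(1) cl(3)] by (rule mon_span_add)
  ultimately show ?thesis
    unfolding has_lead_exp_def using cl(1) cl' assms(1) by (auto simp: add_in_exps exp_unit_in_exps)
qed

lemma mon_mult_has_lead_exp:
  assumes "a \<in> exps n" "has_lead_exp \<beta> g"
  shows "has_lead_exp (a + \<beta>) (M a \<otimes> g)"
  using assms(1)
proof (induction rule: exps_induct)
  case zero
  then show ?case
    using assms(2) by (simp add: mon_zero has_lead_exp_closed)
next
  case (step j a)
  then have "M (a + exp_unit j) \<otimes> g = x j \<otimes> (M a \<otimes> g)"
    using assms(2) by (simp add: x_mult_mon[symmetric] m_assoc has_lead_exp_closed)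
  moreover have "a + exp_unit j + \<beta> = a + \<beta> + exp_unit j"
    by (simp add: add_ac)
  ultimately show ?case
    using x_mult_has_lead_exp[OF step.hyps(1) step.IH] by metis
qed

lemma lower_span_mult_has_lead_exp:
  assumes "has_lead_exp \<beta> g"
  shows "y \<in> lower_span \<alpha> \<Longrightarrow> y \<otimes> g \<in> lower_span (\<alpha> + \<beta>)"
proof (induction rule: mon_span.induct)
  case zero
  then show ?case using assms by (simp add: mon_span.zero has_lead_exp_closed)
next
  case (add_scaled_mon r a y)
  have "(r \<otimes> M a \<oplus> y) \<otimes> g = r \<otimes> (M a \<otimes> g) \<oplus> y \<otimes> g"
    using add_scaled_mon.hyps assms by (simp add: l_distr m_assoc has_lead_exp_closed)
  moreover have "M a \<otimes> g \<in> lower_span (\<alpha> + \<beta>)"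
    using mon_mult_has_lead_exp[OF add_scaled_mon.hyps(2) assms]
      deglex_less_add_right[OF add_scaled_mon.hyps(3)] by (rule has_lead_exp_in_lower_span)
  ultimately show ?case
    using add_scaled_mon mon_span_add mon_span_smult by metis
qed

lemma has_lead_exp_mult:
  assumes "has_lead_exp \<alpha> f" "has_lead_exp \<beta> g"
  shows "has_lead_exp (\<alpha> + \<beta>) (f \<otimes> g)"
proof -
  obtain c l where cl: "\<alpha> \<in> exps n" "c \<in> R - {\<zero>}" "l \<in> lower_span \<alpha>" "f = c \<otimes> M \<alpha> \<oplus> l"
    using assms(1) unfolding has_lead_exp_def by blast
  obtain c' l' where cl': "c' \<in> R - {\<zero>}" "l' \<in> lower_span (\<alpha> + \<beta>)"
    "M \<alpha> \<otimes> g = c' \<otimes> M (\<alpha> + \<beta>) \<oplus> l'"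
    using mon_mult_has_lead_exp[OF cl(1) assms(2)] unfolding has_lead_exp_def by blast
  have "f \<otimes> g = (c \<otimes> c') \<otimes> M (\<alpha> + \<beta>) \<oplus> (c \<otimes> l' \<oplus> l \<otimes> g)"
    using cl cl' assms(2) by (simp add: l_distr r_distr m_assoc a_assoc has_lead_exp_closed)
  moreover have "c \<otimes> l' \<oplus> l \<otimes> g \<in> lower_span (\<alpha> + \<beta>)"
    using cl cl' lower_span_mult_has_lead_exp[OF assms(2) cl(3)] mon_span_add mon_span_smult by blast
  ultimately show ?thesis
    using assms cl cl' mult_in_R_nonzero unfolding has_lead_exp_def by (auto simp: add_in_exps)
qed

lemma mon_span_representation:
  assumes "y \<in> mon_span P"
  obtains c T where "finite T" "T \<subseteq> {a \<in> exps n. P a}" "\<forall>a. c a \<in> R" "\<forall>a. a \<notin> T \<longrightarrow> c a = \<zero>"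
    "y = (\<Oplus>a\<in>T. c a \<otimes> M a)"
proof -
  have "\<exists>c T. finite T \<and> T \<subseteq> {a \<in> exps n. P a} \<and> (\<forall>a. c a \<in> R) \<and> (\<forall>a. a \<notin> T \<longrightarrow> c a = \<zero>)
      \<and> y = (\<Oplus>a\<in>T. c a \<otimes> M a)"
    using assms
  proof (induction rule: mon_span.induct)
    case zero
    show ?case
      using zero_in_R by (intro exI[of _ "\<lambda>_. \<zero>"] exI[of _ "{}"]) auto
  next
    case (add_scaled_mon r a y)
    then obtain c T where cT: "finite T" "T \<subseteq> {a \<in> exps n. P a}" "\<forall>a. c a \<in> R"
      "\<forall>a. a \<notin> T \<longrightarrow> c a = \<zero>" "y = (\<Oplus>a\<in>T. c a \<otimes> M a)"
      by blast
    define c' where "c' = c(a := r \<oplus> c a)"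
    have "(\<Oplus>b\<in>insert a T. c' b \<otimes> M b)
        = (\<Oplus>b\<in>insert a T. c b \<otimes> M b \<oplus> (if b = a then r \<otimes> M b else \<zero>))"
      using cT(3) add_scaled_mon.hyps(1) by (intro finsum_cong') (auto simp: c'_def l_distr a_comm)
    also have "\<dots> = (\<Oplus>b\<in>insert a T. c b \<otimes> M b) \<oplus> r \<otimes> M a"
      using cT add_scaled_mon.hyps(1) add.finprod_singleton_swap[of a "insert a T" "\<lambda>b. r \<otimes> M b"]
      by (simp add: finsum_addf Pi_iff)
    also have "(\<Oplus>b\<in>insert a T. c b \<otimes> M b) = y"
      unfolding cT(5) using cT by (intro add.finprod_mono_neutral_cong_right) (auto simp: Pi_iff)
    finally have "r \<otimes> M a \<oplus> y = (\<Oplus>b\<in>insert a T. c' b \<otimes> M b)"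
      using add_scaled_mon.hyps(1) cT by (simp add: a_comm)
    moreover have "\<forall>b. c' b \<in> R"
      using cT(3) add_scaled_mon.hyps(1) add_in_R by (simp add: c'_def)
    ultimately show ?case
      using cT add_scaled_mon.hyps by (intro exI[of _ c'] exI[of _ "insert a T"]) (auto simp: c'_def)
  qed
  with that show thesis by blast
qed

lemma mon_coeff_zero:
  assumes "finite T" "T \<subseteq> exps n" "\<forall>a. c a \<in> R" "\<forall>a. a \<notin> T \<longrightarrow> c a = \<zero>"
    and "(\<Oplus>a\<in>T. c a \<otimes> M a) = \<zero>"
  shows "c b = \<zero>"
proof -
  define Q where "Q c \<longleftrightarrow> (\<forall>a. c a \<in> R) \<and> (\<forall>a. a \<notin> exps n \<longrightarrow> c a = \<zero>) \<and>
      finite {a. c a \<noteq> \<zero>} \<and> \<zero> = (\<Oplus>a\<in>{a. c a \<noteq> \<zero>}. c a \<otimes> M a)" for c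
  have "\<exists>!c. Q c"
    unfolding Q_def using free_basis zero_closed unfolding free_left_basis_def by (rule bspec)
  moreover have "Q (\<lambda>_. \<zero>)"
    using zero_in_R by (simp add: Q_def)
  moreover have "Q c"
  proof -
    have supp: "{a. c a \<noteq> \<zero>} \<subseteq> T"
      using assms(4) by blast
    have "(\<Oplus>a\<in>T. c a \<otimes> M a) = (\<Oplus>a\<in>{a. c a \<noteq> \<zero>}. c a \<otimes> M a)"
      by (rule add.finprod_mono_neutral_cong_right) (use assms(1,3) supp in \<open>auto simp: Pi_iff\<close>)
    then show ?thesis
      unfolding Q_def using assms supp finite_subset by fastforce
  qed
  ultimately show ?thesis
    by metis
qed

lemma has_lead_exp_nonzero:
  assumes "has_lead_exp \<alpha> f"
  shows "f \<noteq> \<zero>"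
proof
  assume f: "f = \<zero>"
  obtain c l where cl: "\<alpha> \<in> exps n" "c \<in> R - {\<zero>}" "l \<in> lower_span \<alpha>" "f = c \<otimes> M \<alpha> \<oplus> l"
    using assms unfolding has_lead_exp_def by blast
  obtain d T where dT: "finite T" "T \<subseteq> {a \<in> exps n. deglex_less n a \<alpha>}" "\<forall>a. d a \<in> R"
    "\<forall>a. a \<notin> T \<longrightarrow> d a = \<zero>" "l = (\<Oplus>a\<in>T. d a \<otimes> M a)"
    using cl(3) by (rule mon_span_representation)
  have "\<alpha> \<notin> T"
    using dT(2) deglex_less_irrefl by blast
  define d' where "d' = d(\<alpha> := c)"
  have "(\<Oplus>a\<in>insert \<alpha> T. d' a \<otimes> M a) = c \<otimes> M \<alpha> \<oplus> (\<Oplus>a\<in>T. d' a \<otimes> M a)"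
    using dT cl(2) \<open>\<alpha> \<notin> T\<close> by (simp add: finsum_insert Pi_iff d'_def)
  also have "(\<Oplus>a\<in>T. d' a \<otimes> M a) = l"
    unfolding dT(5) using dT(3) \<open>\<alpha> \<notin> T\<close> by (intro finsum_cong') (auto simp: d'_def)
  finally have "(\<Oplus>a\<in>insert \<alpha> T. d' a \<otimes> M a) = \<zero>"
    using cl(4) f by simp
  then have "d' \<alpha> = \<zero>"
    by (rule mon_coeff_zero[rotated -1]) (use dT cl in \<open>auto simp: d'_def\<close>)
  then show False
    using cl(2) by (simp add: d'_def)
qed

lemma nonzero_has_lead_exp:
  assumes "f \<in> carrier A" "f \<noteq> \<zero>"
  obtains \<alpha> where "has_lead_exp \<alpha> f"
proof -
  obtain c where c: "\<forall>a. c a \<in> R" "\<forall>a. a \<notin> exps n \<longrightarrow> c a = \<zero>" "finite {a. c a \<noteq> \<zero>}"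
    "f = (\<Oplus>a\<in>{a. c a \<noteq> \<zero>}. c a \<otimes> M a)"
    using free_basis assms(1) unfolding free_left_basis_def by blast
  define S where "S = {a. c a \<noteq> \<zero>}"
  have "S \<noteq> {}"
  proof
    assume "S = {}"
    then show False
      using c(4) assms(2) by (simp add: S_def[symmetric])
  qed
  then have S: "finite S" "S \<noteq> {}" "S \<subseteq> exps n"
    using c by (auto simp: S_def)
  then obtain \<alpha> where \<alpha>: "\<alpha> \<in> S" "\<forall>a\<in>S - {\<alpha>}. deglex_less n a \<alpha>"
    using finite_exps_has_deglex_max by blast
  have "f = (\<Oplus>a\<in>insert \<alpha> (S - {\<alpha>}). c a \<otimes> M a)"
    using c(4) \<alpha>(1) by (simp add: S_def[symmetric] insert_absorb)
  also have "\<dots> = c \<alpha> \<otimes> M \<alpha> \<oplus> (\<Oplus>a\<in>S - {\<alpha>}. c a \<otimes> M a)"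
    using c(1) S(1) by (intro finsum_insert) auto
  moreover have "(\<Oplus>a\<in>S - {\<alpha>}. c a \<otimes> M a) \<in> lower_span \<alpha>"
    using S \<alpha> c(1) by (intro mon_span_finsum scaled_mon_in_mon_span) auto
  ultimately have "has_lead_exp \<alpha> f"
    using S(3) \<alpha>(1) c(1) unfolding has_lead_exp_def S_def by blast
  with that show thesis .
qed

lemma mult_nonzero:
  assumes "f \<in> carrier A" "f \<noteq> \<zero>" "g \<in> carrier A" "g \<noteq> \<zero>"
  shows "f \<otimes> g \<noteq> \<zero>"
proof -
  obtain \<alpha> \<beta> where "has_lead_exp \<alpha> f" "has_lead_exp \<beta> g"
    using nonzero_has_lead_exp assms by metis
  then show ?thesis
    using has_lead_exp_mult has_lead_exp_nonzero by blast
qed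

lemma x_minus_nonzero:
  assumes "i < n" "z \<in> R"
  shows "x i \<ominus> z \<noteq> \<zero>"
proof -
  have "x i \<ominus> z = \<one> \<otimes> M (exp_unit i) \<oplus> (\<ominus> z) \<otimes> M 0"
    using assms by (simp add: mon_exp_unit mon_zero a_minus_def)
  moreover have "(\<ominus> z) \<otimes> M 0 \<in> lower_span (exp_unit i)"
    using assms uminus_in_R zero_in_exps
    by (intro scaled_mon_in_mon_span deglex_less_if_degree_less)
      (auto simp: total_degree_exp_unit total_degree_def[of n 0] zero_fun_apply)
  ultimately have "has_lead_exp (exp_unit i) (x i \<ominus> z)"
    unfolding has_lead_exp_def using assms one_in_R one_neq_zero exp_unit_in_exps by blast
  then show ?thesis
    by (rule has_lead_exp_nonzero)
qed

subsection \<open>Algebraic sets\<close>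

lemma point_ideal_generators_closed:
  assumes "Z \<in> points R n"
  shows "{x i \<ominus> Z ! i | i. i < n} \<subseteq> carrier A"
proof -
  have "Z ! i \<in> R" if "i < n" for i
    using assms that by (auto simp: points_def)
  then show ?thesis
    by (auto intro: minus_closed)
qed

lemma point_ideal_is_ideal: "Z \<in> points R n \<Longrightarrow> ideal (point_ideal A x n Z) A"
  unfolding point_ideal_def by (rule genideal_ideal[OF point_ideal_generators_closed])

lemma vanishing_mult:
  assumes "g \<in> carrier A" "h \<in> carrier A"
  shows "vanishing A R x n g \<union> vanishing A R x n h \<subseteq> vanishing A R x n (g \<otimes> h)"
  using assms ideal.I_r_closed[OF point_ideal_is_ideal] ideal.I_l_closed[OF point_ideal_is_ideal]
  unfolding vanishing_def by auto

lemma algebraic_set_Un: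
  assumes "algebraic_set A R x n S" "algebraic_set A R x n T"
  shows "algebraic_set A R x n (S \<union> T)"
proof (cases "S = points R n \<or> T = points R n")
  case True
  then show ?thesis
    using assms by (auto simp: algebraic_set_def)
next
  case False
  then obtain g h where g: "g \<in> carrier A" "g \<noteq> \<zero>" "S \<subseteq> vanishing A R x n g"
    and h: "h \<in> carrier A" "h \<noteq> \<zero>" "T \<subseteq> vanishing A R x n h"
    using assms unfolding algebraic_set_def by blast
  then have "S \<union> T \<subseteq> vanishing A R x n (g \<otimes> h)"
    using vanishing_mult by blast
  moreover have "g \<otimes> h \<in> carrier A" "g \<otimes> h \<noteq> \<zero>"
    using g h mult_nonzero by auto
  ultimately show ?thesis
    using assms unfolding algebraic_set_def by blast
qed

lemma algebraic_set_singleton: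
  assumes "Z \<in> points R n"
  shows "algebraic_set A R x n {Z}"
proof (cases "n = 0")
  case True
  then have "points R n = {Z}"
    using assms by (auto simp: points_def)
  then show ?thesis
    by (simp add: algebraic_set_def)
next
  case False
  then have "Z ! 0 \<in> R"
    using assms by (auto simp: points_def)
  moreover have "x 0 \<ominus> Z ! 0 \<in> point_ideal A x n Z"
    unfolding point_ideal_def using genideal_self[OF point_ideal_generators_closed[OF assms]] False
    by blast
  ultimately have "x 0 \<ominus> Z ! 0 \<in> carrier A" "x 0 \<ominus> Z ! 0 \<noteq> \<zero>"
      "{Z} \<subseteq> vanishing A R x n (x 0 \<ominus> Z ! 0)"
    using False assms x_minus_nonzero[of 0 "Z ! 0"] by (auto simp: vanishing_def)
  then show ?thesis
    using assms unfolding algebraic_set_def by blast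
qed

lemma algebraic_set_finite: "finite S \<Longrightarrow> S \<subseteq> points R n \<Longrightarrow> algebraic_set A R x n S"
proof (induction S rule: finite_induct)
  case empty
  then show ?case
    using one_neq_zero unfolding algebraic_set_def by blast
next
  case (insert Z S)
  then show ?case
    using algebraic_set_Un[OF algebraic_set_singleton] by (metis insert_is_Un insert_subset)
qed

end

lemma algebraic_set_Inter:
  assumes "\<forall>S\<in>F. algebraic_set A R x n S"
  shows "algebraic_set A R x n (points R n \<inter> \<Inter>F)"
proof (cases "F \<subseteq> {points R n}")
  case True
  then have "points R n \<inter> \<Inter>F = points R n"
    by blast
  then show ?thesis
    by (simp add: algebraic_set_def)
next
  case False
  then obtain S where "S \<in> F" "S \<noteq> points R n"
    by blast
  then obtain g where g: "g \<in> carrier A" "g \<noteq> \<zero>\<^bsub>A\<^esub>" "S \<subseteq> vanishing A R x n g"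
    using assms unfolding algebraic_set_def by blast
  have "points R n \<inter> \<Inter>F \<subseteq> vanishing A R x n g"
    using \<open>S \<in> F\<close> g(3) by blast
  then show ?thesis
    using g(1,2) unfolding algebraic_set_def by blast
qed

theorem corollary4p5:
  fixes A :: "('a, 'b) ring_scheme" and R :: "'a set" and x :: "nat \<Rightarrow> 'a" and n :: nat
  assumes "left_noetherian_sub A R" and "subring_domain A R"
    and "bijective_skew_PBW A R x n"
  shows "(algebraic_set A R x n {} \<and>
          algebraic_set A R x n (points R n) \<and>
          (\<forall>S T. algebraic_set A R x n S \<and> algebraic_set A R x n T \<longrightarrow>
                 algebraic_set A R x n (S \<union> T)) \<and>
          (\<forall>F. (\<forall>S \<in> F. algebraic_set A R x n S) \<longrightarrow>
                 algebraic_set A R x n (points R n \<inter> \<Inter>F)))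
       \<and> (\<forall>S. finite S \<and> S \<subseteq> points R n \<longrightarrow> algebraic_set A R x n S)"
proof -
  have "skew_PBW A R x n"
    using assms(3) by (simp add: bijective_skew_PBW_def)
  then interpret skew_PBW_domain A R x n
    using assms(2) by (intro skew_PBW_domain.intro skew_PBW_domain_axioms.intro) (simp_all add: skew_PBW_def)
  have "algebraic_set A R x n (points R n)"
    by (simp add: algebraic_set_def)
  then show ?thesis
    using algebraic_set_finite[of "{}"] algebraic_set_Un algebraic_set_Inter algebraic_set_finite
    by blast
qed

end
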